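(* Let $D$ be a long knot diagram, possibly with null vertices, and let $a\neq b$ be two points on edges of $D$, away from crossings and null vertices. Let $D'$ be obtained from $D$ by inserting a new null vertex at a point of an edge different from $a$ and $b$. Then $\tilde g_{ab}$ computed in $D'$ equals $\tilde g_{ab}$ computed in $D$.
   Context: A long knot diagram is a planar diagram of a long oriented knot. It may contain null vertices: marked points on the knot (away from crossings) whose only role is to cut edges. Edges are the arcs obtained by cutting the knot at every crossing (on both strands) and at every null vertex; they are labelled by distinct labels, and for a label $\ell$ we write $\ell^+$ for the label of the next edge along the orientation. A crossing is $c=(s,i,j)$ with sign $s=\pm1$, incoming over-edge $i$ and incoming under-edge $j$ (outgoing over-edge $i^+$, outgoing under-edge $j^+$). A null vertex with incoming edge $j$ and outgoing edge $k$ is recorded by the pair $(j,k)$. Let $A=I+\sum_cA_c+\sum_{\mathrm{nv}}A_{\mathrm{nv}}$ (square matrix indexed by edge labels over $\mathbb{Z}[T^{\pm1}]$), where for a crossing $c=(s,i,j)$, $A_c$ is zero except for entry $-T^s$ at $(i,i^+)$, entry $T^s-1$ at $(i,j^+)$ and entry $-1$ at $(j,j^+)$; and for a null vertex $(j,k)$, $A_{\mathrm{nv}}$ is zero except for entry $-1$ at $(j,k)$. Let $G=(g_{\alpha\beta})=A^{-1}$ (over $\mathbb{Q}(T)$). For two distinct points $a,b$ on edges $\alpha,\beta$ (away from crossings and null vertices), define $\tilde g_{ab}=g_{\alpha\beta}$ if $\alpha\neq\beta$ or if $\alpha=\beta$ and $a$ precedes $b$ along the orientation of that edge, and $\tilde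 g_{ab}=g_{\alpha\beta}-1$ if $\alpha=\beta$ and $a$ comes after $b$. *)

theory Defs
  imports "HOL-Computational_Algebra.Polynomial" "HOL-Computational_Algebra.Fraction_Field"
    "Jordan_Normal_Form.Gauss_Jordan_Elimination"
begin

text \<open>
  The long knot is parametrised by the real line,
  oriented by increasing parameter.  The diagram is a pair (X, N):
  X is the set of crossings, each a triple (s, p, q) with sign s (1 or -1),
  p the parameter of the point where the knot passes over the crossing and
  q the parameter where it passes under it; N is the set of parameters of the
  null vertices.  The cut points are all these parameters; the edges are the
  open arcs between consecutive cut points, numbered 0, 1, 2, ... along the
  orientation, so that the label of the next edge is l+1.
\<close>

type_synonym diagram = "(int \<times> real \<times> real) set \<times> real set"

definition cuts :: "diagram \<Rightarrow> real set" where
  "cuts D = (\<Union>(s,p,q)\<in>fst D. {p, q}) \<union> snd D"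

definition long_knot_diagram :: "diagram \<Rightarrow> bool" where
  "long_knot_diagram D \<longleftrightarrow>
     finite (fst D) \<and> finite (snd D) \<and>
     (\<forall>(s,p,q)\<in>fst D. (s = 1 \<or> s = -1) \<and> p \<noteq> q \<and> p \<notin> snd D \<and> q \<notin> snd D) \<and>
     (\<forall>c\<in>fst D. \<forall>c'\<in>fst D. c \<noteq> c' \<longrightarrow>
        {fst (snd c), snd (snd c)} \<inter> {fst (snd c'), snd (snd c')} = {})"

text \<open>Label of the edge containing the parameter x (x not a cut point), resp.
  of the edge incoming to the cut point x.\<close>
definition edge :: "diagram \<Rightarrow> real \<Rightarrow> nat" where
  "edge D x = card {t \<in> cuts D. t < x}"

definition num_edges :: "diagram \<Rightarrow> nat" where
  "num_edges D = card (cuts D) + 1"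

type_synonym QT = "rat poly fract"

definition TT :: QT where "TT = Fract [:0, 1:] 1"

definition Tpow :: "int \<Rightarrow> QT" where
  "Tpow s = (if s = 1 then TT else inverse TT)"

definition crossing_entry :: "diagram \<Rightarrow> int \<times> real \<times> real \<Rightarrow> nat \<Rightarrow> nat \<Rightarrow> QT" where
  "crossing_entry D c r k =
     (let s = fst c; i = edge D (fst (snd c)); j = edge D (snd (snd c)) in
        (if r = i \<and> k = i + 1 then - Tpow s else 0)
      + (if r = i \<and> k = j + 1 then Tpow s - 1 else 0)
      + (if r = j \<and> k = j + 1 then -1 else 0))"

definition nv_entry :: "diagram \<Rightarrow> real \<Rightarrow> nat \<Rightarrow> nat \<Rightarrow> QT" where
  "nv_entry D v r k = (let j = edge D v in if r = j \<and> k = j + 1 then -1 else 0)"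

definition Amat :: "diagram \<Rightarrow> QT mat" where
  "Amat D = mat (num_edges D) (num_edges D) (\<lambda>(r,k).
      (if r = k then 1 else 0)
    + (\<Sum>c\<in>fst D. crossing_entry D c r k)
    + (\<Sum>v\<in>snd D. nv_entry D v r k))"

definition Gmat :: "diagram \<Rightarrow> QT mat" where
  "Gmat D = the (mat_inverse (Amat D))"

definition gtilde :: "diagram \<Rightarrow> real \<Rightarrow> real \<Rightarrow> QT" where
  "gtilde D a b =
     (let \<alpha> = edge D a; \<beta> = edge D b in
        if \<alpha> = \<beta> \<and> b < a then Gmat D $$ (\<alpha>, \<beta>) - 1 else Gmat D $$ (\<alpha>, \<beta>))"

end

theory Submission
  imports Defs "Jordan_Normal_Form.Determinant"
begin

text \<open>
  The matrix A is invertible: T A has polynomial entries, and at T = 1 it becomes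
  upper unitriangular, because the only entries off the diagonal and the superdiagonal,
  T (T^s - 1) at (i, j + 1), vanish there.

  Inserting a null vertex at t on edge k splits that edge into the edges k and k + 1 (all later
  labels shift by one) and adds the row e_k - e_(k+1) to A. If \<rho> merges the labels k and k + 1
  back into k, then G'(x, y) = G(\<rho> x, \<rho> y) - [x = k + 1 \<and> y = k] is a right inverse of the new
  matrix, as one checks row by row. For points a, b away from t the labels shift compatibly, and
  the correction term arises exactly when b < t < a lie on the same edge of D, where it accounts
  for the -1 in the definition of g-tilde.
\<close>

lemma mat_inverse_right_inverse:
  fixes A :: "'a::field mat"
  assumes A: "A \<in> carrier_mat n n" and det: "det A \<noteq> 0"
  shows "A * the (mat_inverse A) = 1\<^sub>m n" and "the (mat_inverse A) \<in> carrier_mat n n"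
proof -
  have "mat_inverse A \<noteq> None"
    using mat_inverse(1)[OF A, of undefined] det_non_zero_imp_unit[OF A det, of undefined] by blast
  then obtain B where "mat_inverse A = Some B" by blast
  with mat_inverse(2)[OF A this]
  show "A * the (mat_inverse A) = 1\<^sub>m n" and "the (mat_inverse A) \<in> carrier_mat n n" by simp_all
qed

lemma the_mat_inverse_eq:
  fixes A B :: "'a::field mat"
  assumes A: "A \<in> carrier_mat n n" and B: "B \<in> carrier_mat n n" and AB: "A * B = 1\<^sub>m n"
  shows "the (mat_inverse A) = B"
proof -
  have "det A \<noteq> 0"
    using arg_cong[OF AB, of det] det_mult[OF A B] by auto
  then have AB': "A * the (mat_inverse A) = 1\<^sub>m n" and B': "the (mat_inverse A) \<in> carrier_mat n n"
    using mat_inverse_right_inverse[OF A] by auto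
  have BA: "B * A = 1\<^sub>m n" by (rule mat_mult_left_right_inverse[OF A B AB])
  have "the (mat_inverse A) = (B * A) * the (mat_inverse A)" using BA B' by simp
  also have "\<dots> = B * (A * the (mat_inverse A))" by (rule assoc_mult_mat[OF B A B'])
  finally show ?thesis using AB' B by simp
qed

subsection \<open>Invertibility of A\<close>

interpretation to_fract_hom: comm_ring_hom "to_fract :: rat poly \<Rightarrow> rat poly fract"
  by unfold_locales auto

interpretation eval_at_1_hom: comm_ring_hom "\<lambda>p :: rat poly. poly p 1"
  by unfold_locales auto

definition T_poly :: "rat poly" where
  "T_poly = [:0, 1:]"

definition T_Tpow_poly :: "int \<Rightarrow> rat poly" where
  "T_Tpow_poly s = (if s = 1 then T_poly * T_poly else 1)"

definition crossing_entry_poly :: "diagram \<Rightarrow> int \<times> real \<times> real \<Rightarrow> nat \<Rightarrow> nat \<Rightarrow> rat poly" where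
  "crossing_entry_poly D c r k =
     (let s = fst c; i = edge D (fst (snd c)); j = edge D (snd (snd c)) in
        (if r = i \<and> k = i + 1 then - T_Tpow_poly s else 0)
      + (if r = i \<and> k = j + 1 then T_Tpow_poly s - T_poly else 0)
      + (if r = j \<and> k = j + 1 then - T_poly else 0))"

definition nv_entry_poly :: "diagram \<Rightarrow> real \<Rightarrow> nat \<Rightarrow> nat \<Rightarrow> rat poly" where
  "nv_entry_poly D v r k = (let j = edge D v in if r = j \<and> k = j + 1 then - T_poly else 0)"

definition Amat_poly :: "diagram \<Rightarrow> rat poly mat" where
  "Amat_poly D = mat (num_edges D) (num_edges D) (\<lambda>(r, k).
      (if r = k then T_poly else 0)
    + (\<Sum>c\<in>fst D. crossing_entry_poly D c r k)
    + (\<Sum>v\<in>snd D. nv_entry_poly D v r k))"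

lemma TT_nonzero: "TT \<noteq> 0"
  by (simp add: TT_def Zero_fract_def eq_fract)

lemma to_fract_T_poly: "to_fract T_poly = TT"
  by (simp add: TT_def to_fract_def T_poly_def)

lemma to_fract_T_Tpow_poly: "to_fract (T_Tpow_poly s) = TT * Tpow s"
  using TT_nonzero by (auto simp: T_Tpow_poly_def Tpow_def to_fract_T_poly)

lemma map_to_fract_Amat_poly: "map_mat to_fract (Amat_poly D) = TT \<cdot>\<^sub>m Amat D"
proof -
  have "to_fract (crossing_entry_poly D c r k) = TT * crossing_entry D c r k" for c r k
    unfolding crossing_entry_poly_def crossing_entry_def Let_def
    by (simp add: to_fract_T_Tpow_poly to_fract_T_poly algebra_simps)
  moreover have "to_fract (nv_entry_poly D v r k) = TT * nv_entry D v r k" for v r k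
    unfolding nv_entry_poly_def nv_entry_def Let_def by (simp add: to_fract_T_poly)
  ultimately show ?thesis
    by (intro eq_matI) (auto simp: Amat_poly_def Amat_def to_fract_hom.hom_sum to_fract_T_poly
        sum_distrib_left algebra_simps)
qed

lemma poly_det_Amat_poly_1: "poly (det (Amat_poly D)) 1 = 1"
proof -
  have T1: "poly T_poly 1 = 1" by (simp add: T_poly_def)
  have crossing: "poly (crossing_entry_poly D c r k) 1 = 0" if "k \<le> r" for c r k
    using that unfolding crossing_entry_poly_def Let_def by (auto simp: T_Tpow_poly_def T1)
  have nv: "poly (nv_entry_poly D v r k) 1 = 0" if "k \<le> r" for v r k
    using that unfolding nv_entry_poly_def Let_def by auto
  let ?M = "map_mat (\<lambda>p. poly p 1) (Amat_poly D)"
  have "upper_triangular ?M"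
    unfolding upper_triangular_def by (auto simp: Amat_poly_def poly_sum crossing nv)
  then have "det ?M = prod_list (diag_mat ?M)"
    by (rule det_upper_triangular[where n = "num_edges D"]) (simp add: Amat_poly_def)
  also have "\<dots> = 1"
    unfolding prod_list_diag_prod
    by (rule prod.neutral) (auto simp: Amat_poly_def poly_sum crossing nv T1)
  finally show ?thesis by simp
qed

lemma det_Amat_nonzero: "det (Amat D) \<noteq> 0"
proof
  assume "det (Amat D) = 0"
  then have "to_fract (det (Amat_poly D)) = 0"
    by (simp flip: to_fract_hom.hom_det add: map_to_fract_Amat_poly)
  then show False using poly_det_Amat_poly_1[of D] by simp
qed

lemma Amat_carrier: "Amat D \<in> carrier_mat (num_edges D) (num_edges D)"
  by (simp add: Amat_def)

lemma Amat_mult_Gmat: "Amat D * Gmat D = 1\<^sub>m (num_edges D)"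
  and Gmat_carrier: "Gmat D \<in> carrier_mat (num_edges D) (num_edges D)"
  unfolding Gmat_def using mat_inverse_right_inverse[OF Amat_carrier det_Amat_nonzero] by auto

lemma finite_cuts: "long_knot_diagram D \<Longrightarrow> finite (cuts D)"
  by (cases D) (auto simp: long_knot_diagram_def cuts_def)

lemma edge_le_card: "finite (cuts D) \<Longrightarrow> edge D x \<le> card (cuts D)"
  unfolding edge_def by (rule card_mono) auto

lemma edge_cut_less: "finite (cuts D) \<Longrightarrow> p \<in> cuts D \<Longrightarrow> edge D p + 1 < num_edges D"
  unfolding edge_def num_edges_def using psubset_card_mono[of "cuts D" "{t \<in> cuts D. t < p}"]
  by auto

lemma edge_mono: "finite (cuts D) \<Longrightarrow> x \<le> y \<Longrightarrow> edge D x \<le> edge D y"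
  unfolding edge_def by (rule card_mono) auto

lemma edge_strict_mono_cut: "finite (cuts D) \<Longrightarrow> p \<in> cuts D \<Longrightarrow> p < y \<Longrightarrow> edge D p < edge D y"
  unfolding edge_def by (rule psubset_card_mono) auto

lemma crossing_points_in_cuts: "(s, p, q) \<in> X \<Longrightarrow> p \<in> cuts (X, N) \<and> q \<in> cuts (X, N)"
  by (force simp: cuts_def)

definition Amat_apply :: "diagram \<Rightarrow> (nat \<Rightarrow> QT) \<Rightarrow> nat \<Rightarrow> QT" where
  "Amat_apply D f x = (\<Sum>z<num_edges D. Amat D $$ (x, z) * f z)"

definition crossing_action :: "int \<Rightarrow> nat \<Rightarrow> nat \<Rightarrow> (nat \<Rightarrow> QT) \<Rightarrow> nat \<Rightarrow> QT" where
  "crossing_action s i j f x =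
     (if x = i then - Tpow s * f (i + 1) + (Tpow s - 1) * f (j + 1) else 0)
   + (if x = j then - f (j + 1) else 0)"

definition nv_action :: "nat \<Rightarrow> (nat \<Rightarrow> QT) \<Rightarrow> nat \<Rightarrow> QT" where
  "nv_action j f x = (if x = j then - f (j + 1) else 0)"

lemma index_Amat_mult:
  assumes "B \<in> carrier_mat (num_edges D) m" "x < num_edges D" "y < m"
    and column: "\<And>z. z < num_edges D \<Longrightarrow> B $$ (z, y) = f z"
  shows "(Amat D * B) $$ (x, y) = Amat_apply D f x"
  using assms unfolding Amat_apply_def
  by (auto simp: Amat_def scalar_prod_def atLeast0LessThan intro: sum.cong)

lemma Amat_apply_Gmat_column:
  assumes "x < num_edges D" "y < num_edges D"
  shows "Amat_apply D (\<lambda>z. Gmat D $$ (z, y)) x = (if x = y then 1 else 0)"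
  using index_Amat_mult[OF Gmat_carrier assms] assms by (simp add: Amat_mult_Gmat)

lemma sum_single_entry_mult:
  fixes a :: "'a::semiring_0" and n m :: nat
  shows "(\<Sum>z<n. (if P \<and> z = m then a else 0) * f z) = (if P \<and> m < n then a * f m else 0)"
proof -
  have "(\<Sum>z<n. (if P \<and> z = m then a else 0) * f z)
      = (\<Sum>z<n. if z = m then (if P then a * f m else 0) else 0)"
    by (rule sum.cong) auto
  also have "\<dots> = (if P \<and> m < n then a * f m else 0)"
    by (subst sum.delta) auto
  finally show ?thesis .
qed

lemma sum_crossing_entry_mult:
  assumes "edge D p + 1 < n" "edge D q + 1 < n"
  shows "(\<Sum>z<n. crossing_entry D (s, p, q) x z * f z) = crossing_action s (edge D p) (edge D q) f x"
proof -
  let ?i = "edge D p" and ?j = "edge D q"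
  have "(\<Sum>z<n. crossing_entry D (s, p, q) x z * f z) =
      (\<Sum>z<n. (if x = ?i \<and> z = ?i + 1 then - Tpow s else 0) * f z)
    + (\<Sum>z<n. (if x = ?i \<and> z = ?j + 1 then Tpow s - 1 else 0) * f z)
    + (\<Sum>z<n. (if x = ?j \<and> z = ?j + 1 then - 1 else 0) * f z)"
    unfolding crossing_entry_def Let_def sum.distrib[symmetric]
    by (rule sum.cong) (auto simp: algebra_simps)
  then show ?thesis
    unfolding sum_single_entry_mult using assms by (simp add: crossing_action_def)
qed

lemma sum_nv_entry_mult:
  assumes "edge D v + 1 < n"
  shows "(\<Sum>z<n. nv_entry D v x z * f z) = nv_action (edge D v) f x"
proof -
  have "(\<Sum>z<n. nv_entry D v x z * f z) = (\<Sum>z<n. (if x = edge D v \<and> z = edge D v + 1 then - 1 else 0) * f z)"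
    unfolding nv_entry_def Let_def by (rule sum.cong) auto
  then show ?thesis
    unfolding sum_single_entry_mult using assms by (simp add: nv_action_def)
qed

lemma Amat_apply_eq:
  assumes fin: "finite (cuts D)" and x: "x < num_edges D"
  shows "Amat_apply D f x = f x
    + (\<Sum>(s, p, q)\<in>fst D. crossing_action s (edge D p) (edge D q) f x)
    + (\<Sum>v\<in>snd D. nv_action (edge D v) f x)"
proof -
  let ?n = "num_edges D"
  have "Amat_apply D f x = (\<Sum>z<?n. (if x = z then 1 else 0) * f z)
      + (\<Sum>z<?n. \<Sum>c\<in>fst D. crossing_entry D c x z * f z)
      + (\<Sum>z<?n. \<Sum>v\<in>snd D. nv_entry D v x z * f z)"
    unfolding Amat_apply_def sum.distrib[symmetric]
    by (rule sum.cong) (auto simp: Amat_def x algebra_simps sum_distrib_left sum_distrib_right)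
  also have "(\<Sum>z<?n. (if x = z then 1 else 0) * f z) = f x"
    using x by (simp add: if_distrib[of "\<lambda>u. u * f _"] cong: if_cong)
  also have "(\<Sum>z<?n. \<Sum>c\<in>fst D. crossing_entry D c x z * f z)
      = (\<Sum>(s, p, q)\<in>fst D. crossing_action s (edge D p) (edge D q) f x)"
    by (subst sum.swap, rule sum.cong)
      (auto intro!: sum_crossing_entry_mult edge_cut_less[OF fin]
        dest: crossing_points_in_cuts[of _ _ _ "fst D" "snd D"])
  also have "(\<Sum>z<?n. \<Sum>v\<in>snd D. nv_entry D v x z * f z) = (\<Sum>v\<in>snd D. nv_action (edge D v) f x)"
    by (subst sum.swap, rule sum.cong)
      (auto intro!: sum_nv_entry_mult edge_cut_less[OF fin] simp: cuts_def)
  finally show ?thesis .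
qed

subsection \<open>Inserting a null vertex\<close>

text \<open>Splitting edge k into k and k + 1: split_orig k x is the old edge containing the new
  edge x, and split_last k l is the new label of the last piece of the old edge l, i.e. of the
  edge entering the cut point that ends it.\<close>

definition split_last :: "nat \<Rightarrow> nat \<Rightarrow> nat" where
  "split_last k l = (if l < k then l else l + 1)"

definition split_orig :: "nat \<Rightarrow> nat \<Rightarrow> nat" where
  "split_orig k x = (if x \<le> k then x else x - 1)"

lemma split_last_eq_iff [simp]: "split_last k l = split_last k l' \<longleftrightarrow> l = l'"
  by (auto simp: split_last_def)

lemma split_last_neq [simp]: "split_last k l \<noteq> k" "k \<noteq> split_last k l"
  by (auto simp: split_last_def)

lemma crossing_action_split_last:
  assumes "\<And>l. f (split_last k l + 1) = g (l + 1)"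
  shows "crossing_action s (split_last k i) (split_last k j) f (split_last k r)
       = crossing_action s i j g r"
  using assms by (simp add: crossing_action_def)

lemma crossing_action_split_edge: "crossing_action s (split_last k i) (split_last k j) f k = 0"
  by (simp add: crossing_action_def)

lemma nv_action_split_last:
  assumes "\<And>l. f (split_last k l + 1) = g (l + 1)"
  shows "nv_action (split_last k j) f (split_last k r) = nv_action j g r"
  using assms by (simp add: nv_action_def)

lemma nv_action_split_edge: "nv_action (split_last k j) f k = 0"
  by (simp add: nv_action_def)

lemma cuts_insert_nv: "cuts (X, insert t N) = insert t (cuts (X, N))"
  by (auto simp: cuts_def)

lemma edge_insert_nv_self: "edge (X, insert t N) t = edge (X, N) t"
proof -
  have "{u \<in> insert t (cuts (X, N)). u < t} = {u \<in> cuts (X, N). u < t}" by auto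
  then show ?thesis by (simp add: edge_def cuts_insert_nv)
qed

context
  fixes X :: "(int \<times> real \<times> real) set" and N :: "real set" and t :: real
  assumes fin: "finite (cuts (X, N))" and t_notin: "t \<notin> cuts (X, N)"
begin

lemma num_edges_insert_nv: "num_edges (X, insert t N) = num_edges (X, N) + 1"
  using fin t_notin by (simp add: num_edges_def cuts_insert_nv)

lemma edge_insert_nv: "x \<noteq> t \<Longrightarrow> edge (X, insert t N) x = edge (X, N) x + (if t < x then 1 else 0)"
proof -
  assume "x \<noteq> t"
  let ?C = "cuts (X, N)"
  have fin_below: "finite {u \<in> ?C. u < x}" using fin by simp
  show ?thesis
  proof (cases "t < x")
    case True
    then have "{u \<in> insert t ?C. u < x} = insert t {u \<in> ?C. u < x}" by auto
    then show ?thesis using True fin_below t_notin by (simp add: edge_def cuts_insert_nv)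
  next
    case False
    then have "{u \<in> insert t ?C. u < x} = {u \<in> ?C. u < x}" by auto
    then show ?thesis using False by (simp add: edge_def cuts_insert_nv)
  qed
qed

lemma edge_insert_nv_cut:
  assumes p: "p \<in> cuts (X, N)"
  shows "edge (X, insert t N) p = split_last (edge (X, N) t) (edge (X, N) p)"
proof -
  have "p \<noteq> t" using p t_notin by auto
  then consider "t < p" | "p < t" by linarith
  then show ?thesis
  proof cases
    case 1
    then show ?thesis
      using edge_mono[OF fin, of t p] edge_insert_nv[OF \<open>p \<noteq> t\<close>] by (simp add: split_last_def)
  next
    case 2
    then show ?thesis
      using edge_strict_mono_cut[OF fin p 2] edge_insert_nv[OF \<open>p \<noteq> t\<close>] by (simp add: split_last_def)
  qed
qed

lemma Amat_apply_insert_nv_new_row: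
  "Amat_apply (X, insert t N) f (edge (X, N) t) = f (edge (X, N) t) - f (edge (X, N) t + 1)"
proof -
  let ?k = "edge (X, N) t"
  have fin': "finite (cuts (X, insert t N))" using fin by (simp add: cuts_insert_nv)
  have k: "?k < num_edges (X, insert t N)"
    using edge_le_card[OF fin, of t] num_edges_insert_nv by (simp add: num_edges_def)
  have "crossing_action s (edge (X, insert t N) p) (edge (X, insert t N) q) f ?k = 0"
    if "(s, p, q) \<in> X" for s p q
    using crossing_points_in_cuts[OF that] by (simp add: edge_insert_nv_cut crossing_action_split_edge)
  then have "(\<Sum>(s, p, q)\<in>X. crossing_action s (edge (X, insert t N) p) (edge (X, insert t N) q) f ?k) = 0"
    by (intro sum.neutral) auto
  moreover have "(\<Sum>v\<in>N. nv_action (edge (X, insert t N) v) f ?k) = 0"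
    by (rule sum.neutral) (auto simp: edge_insert_nv_cut nv_action_split_edge cuts_def)
  moreover have "t \<notin> N" "finite N" using t_notin fin by (auto simp: cuts_def)
  ultimately show ?thesis
    using Amat_apply_eq[OF fin' k, of f] by (simp add: edge_insert_nv_self nv_action_def)
qed

lemma Amat_apply_insert_nv_old_row:
  assumes r: "r < num_edges (X, N)"
    and shift: "\<And>l. f (split_last (edge (X, N) t) l + 1) = g (l + 1)"
  shows "Amat_apply (X, insert t N) f (split_last (edge (X, N) t) r) - f (split_last (edge (X, N) t) r)
       = Amat_apply (X, N) g r - g r"
proof -
  let ?k = "edge (X, N) t"
  let ?x = "split_last ?k r"
  have fin': "finite (cuts (X, insert t N))" using fin by (simp add: cuts_insert_nv)
  have x: "?x < num_edges (X, insert t N)"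
    using r num_edges_insert_nv by (simp add: split_last_def)
  have "crossing_action s (edge (X, insert t N) p) (edge (X, insert t N) q) f ?x
      = crossing_action s (edge (X, N) p) (edge (X, N) q) g r" if "(s, p, q) \<in> X" for s p q
    using crossing_points_in_cuts[OF that] crossing_action_split_last[where f = f and g = g, OF shift]
    by (simp add: edge_insert_nv_cut)
  then have "(\<Sum>(s, p, q)\<in>X. crossing_action s (edge (X, insert t N) p) (edge (X, insert t N) q) f ?x)
      = (\<Sum>(s, p, q)\<in>X. crossing_action s (edge (X, N) p) (edge (X, N) q) g r)"
    by (intro sum.cong) auto
  moreover have "(\<Sum>v\<in>N. nv_action (edge (X, insert t N) v) f ?x) = (\<Sum>v\<in>N. nv_action (edge (X, N) v) g r)"
    using nv_action_split_last[where k = ?k and f = f and g = g, OF shift]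
    by (intro sum.cong) (auto simp: edge_insert_nv_cut cuts_def)
  moreover have "nv_action (edge (X, insert t N) t) f ?x = 0"
    by (simp add: edge_insert_nv_self nv_action_def)
  moreover have "t \<notin> N" "finite N" using t_notin fin by (auto simp: cuts_def)
  ultimately show ?thesis
    using Amat_apply_eq[OF fin' x, of f] Amat_apply_eq[OF fin r, of g] by simp
qed

lemma Gmat_insert_nv:
  assumes x: "x \<le> num_edges (X, N)" and y: "y \<le> num_edges (X, N)"
  shows "Gmat (X, insert t N) $$ (x, y)
       = Gmat (X, N) $$ (split_orig (edge (X, N) t) x, split_orig (edge (X, N) t) y)
         - (if x = edge (X, N) t + 1 \<and> y = edge (X, N) t then 1 else 0)"
proof -
  let ?n = "num_edges (X, N)" and ?k = "edge (X, N) t" and ?G = "Gmat (X, N)"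
  define C where "C = mat (?n + 1) (?n + 1) (\<lambda>(x, y).
    ?G $$ (split_orig ?k x, split_orig ?k y) - (if x = ?k + 1 \<and> y = ?k then 1 else 0))"
  have C: "C \<in> carrier_mat (?n + 1) (?n + 1)" by (simp add: C_def)
  have A': "Amat (X, insert t N) \<in> carrier_mat (?n + 1) (?n + 1)"
    using Amat_carrier num_edges_insert_nv by metis
  have k: "?k < ?n" using edge_le_card[OF fin, of t] by (simp add: num_edges_def)
  have "Amat (X, insert t N) * C = 1\<^sub>m (?n + 1)"
  proof (rule eq_matI)
    fix x y assume "x < dim_row (1\<^sub>m (?n + 1))" "y < dim_col (1\<^sub>m (?n + 1))"
    then have x: "x < ?n + 1" and y: "y < ?n + 1" by auto
    define f where "f z = ?G $$ (split_orig ?k z, split_orig ?k y) - (if z = ?k + 1 \<and> y = ?k then 1 else 0)"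
      for z
    define g where "g l = ?G $$ (l, split_orig ?k y)" for l
    have y': "split_orig ?k y < ?n" using y k by (auto simp: split_orig_def)
    have "(Amat (X, insert t N) * C) $$ (x, y) = Amat_apply (X, insert t N) f x"
      using x y by (intro index_Amat_mult) (auto simp: num_edges_insert_nv C_def f_def)
    also have "\<dots> = (if x = y then 1 else 0)"
    proof (cases "x = ?k")
      case True
      then show ?thesis
        using Amat_apply_insert_nv_new_row by (simp add: f_def split_orig_def)
    next
      case False
      define r where "r = split_orig ?k x"
      have x_r: "x = split_last ?k r" and r: "r < ?n"
        using False x k by (auto simp: r_def split_orig_def split_last_def)
      have shift: "f (split_last ?k l + 1) = g (l + 1)" for l
        by (auto simp: f_def g_def split_last_def split_orig_def)
      have "Amat_apply (X, insert t N) f x = f x + (Amat_apply (X, N) g r - g r)"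
        using Amat_apply_insert_nv_old_row[where f = f and g = g, OF r shift] x_r by (simp add: algebra_simps)
      also have "\<dots> = f x - g r + (if r = split_orig ?k y then 1 else 0)"
        using Amat_apply_Gmat_column[OF r y'] by (simp add: g_def[abs_def])
      also have "\<dots> = (if x = y then 1 else 0)"
        using x_r by (auto simp: f_def g_def split_orig_def split_last_def)
      finally show ?thesis .
    qed
    finally show "(Amat (X, insert t N) * C) $$ (x, y) = 1\<^sub>m (?n + 1) $$ (x, y)"
      using x y by simp
  qed (simp_all add: C_def num_edges_insert_nv Amat_def)
  then have "Gmat (X, insert t N) = C"
    unfolding Gmat_def by (rule the_mat_inverse_eq[OF A' C])
  then show ?thesis using x y by (simp add: C_def)
qed

end

theorem mainTheorem2:
  fixes X :: "(int \<times> real \<times> real) set" and N :: "real set" and a b t :: real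
  assumes "long_knot_diagram (X, N)"
    and "a \<notin> cuts (X, N)" and "b \<notin> cuts (X, N)" and "a \<noteq> b"
    and "t \<notin> cuts (X, N)" and "t \<noteq> a" and "t \<noteq> b"
  shows "gtilde (X, insert t N) a b = gtilde (X, N) a b"
proof -
  have fin: "finite (cuts (X, N))" using assms(1) by (rule finite_cuts)
  let ?k = "edge (X, N) t"
  have edge_a: "edge (X, insert t N) a = edge (X, N) a + (if t < a then 1 else 0)"
    and edge_b: "edge (X, insert t N) b = edge (X, N) b + (if t < b then 1 else 0)"
    using edge_insert_nv[OF fin assms(5)] assms(6,7) by auto
  have "edge (X, N) a < num_edges (X, N)" "edge (X, N) b < num_edges (X, N)"
    using edge_le_card[OF fin] by (auto simp: num_edges_def less_Suc_eq_le)
  moreover have "t < a \<Longrightarrow> ?k \<le> edge (X, N) a" "a < t \<Longrightarrow> edge (X, N) a \<le> ?k"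
    and "t < b \<Longrightarrow> ?k \<le> edge (X, N) b" "b < t \<Longrightarrow> edge (X, N) b \<le> ?k"
    using edge_mono[OF fin] by auto
  moreover have "t < a \<or> a < t" "t < b \<or> b < t" using assms(6,7) by linarith+
  ultimately show ?thesis
    unfolding gtilde_def Let_def edge_a edge_b
    by (auto simp: Gmat_insert_nv[OF fin assms(5)] split_orig_def)
qed

end
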